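(* Let $p$ be an odd prime, $n$ a positive integer, $q=p^n$ (so $q^2=p^{2n}$), and let $k$ be an integer with $1\le k\le n$ such that $2n/\gcd(2n,k)$ is odd. Let $f$ be either $f(x)=x^2$ or $f(x)=x^{p^k+1}$ on $\mathbb F_{q^2}$, and let $\theta\in\mathbb F_{q^2}^*$ be such that $\theta^{q+1}$ is a nonsquare in $\mathbb F_q$. Then the unital $\mathcal U_\theta:=\{(x,t\theta):x\in\mathbb F_{q^2},t\in\mathbb F_q\}\cup\{(\infty)\}$ in $\Pi(f)$ contains an O'Nan configuration.
   Context: For a planar function $f$ on $\mathbb F_{q^2}$ (i.e.\ $x\mapsto f(x+a)-f(x)$ is bijective for each $a\neq0$; both functions above are planar), $\Pi(f)$ is the projective plane with points $(x,y)\in\mathbb F_{q^2}^2$ and $(a)$ for $a\in\mathbb F_{q^2}\cup\{\infty\}$, lines $L_{a,b}=\{(x,f(x+a)-b):x\in\mathbb F_{q^2}\}\cup\{(a)\}$, $N_a=\{(a,y):y\in\mathbb F_{q^2}\}\cup\{(\infty)\}$ ($a,b\in\mathbb F_{q^2}$), $L_\infty=\{(a):a\in\mathbb F_{q^2}\cup\{\infty\}\}$. A unital is a set of $q^3+1$ points meeting every line in $1$ or $q+1$ points, regarded as a design whose blocks are its intersections with lines meeting it in $q+1$ points. An O'Nan configuration consists of four blocks, any two of which meet, such that the six pairwise intersection points are distinct. *)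

theory Defs
  imports "HOL-Computational_Algebra.Primes"
begin

text \<open>Points of the projective plane Pi(f) over a field 'a (= F_{q^2}):
  affine points (x,y), and points at infinity (a) for a in 'a, and (infinity).\<close>
datatype 'a pt = Aff 'a 'a | Dir 'a | DirInf

datatype 'a ln = L 'a 'a | N 'a | LInf

fun pts :: "('a::ring \<Rightarrow> 'a) \<Rightarrow> 'a ln \<Rightarrow> 'a pt set" where
  "pts f (L a b) = {Aff x (f (x + a) - b) | x. True} \<union> {Dir a}"
| "pts f (N a) = {Aff a y | y. True} \<union> {DirInf}"
| "pts f LInf = range Dir \<union> {DirInf}"

definition subfield_q :: "nat \<Rightarrow> 'a::field set" where
  "subfield_q q = {t. t ^ q = t}"

definition U_theta :: "nat \<Rightarrow> 'a::field \<Rightarrow> 'a pt set" where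
  "U_theta q \<theta> = {Aff x (t * \<theta>) | x t. t \<in> subfield_q q} \<union> {DirInf}"

definition is_block :: "('a::ring \<Rightarrow> 'a) \<Rightarrow> nat \<Rightarrow> 'a pt set \<Rightarrow> 'a pt set \<Rightarrow> bool" where
  "is_block f q U B \<longleftrightarrow> (\<exists>l. B = U \<inter> pts f l \<and> card B = q + 1)"

definition has_ONan :: "('a::ring \<Rightarrow> 'a) \<Rightarrow> nat \<Rightarrow> 'a pt set \<Rightarrow> bool" where
  "has_ONan f q U \<longleftrightarrow>
     (\<exists>B :: nat \<Rightarrow> 'a pt set. \<exists>P :: nat \<Rightarrow> nat \<Rightarrow> 'a pt.
        (\<forall>i<4. is_block f q U (B i)) \<and>
        (\<forall>i<4. \<forall>j<4. i \<noteq> j \<longrightarrow> B i \<inter> B j = {P i j}) \<and>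
        inj_on (\<lambda>(i,j). P i j) {(i,j). i < j \<and> j < (4::nat)})"

end

theory Submission
  imports Defs "HOL-Number_Theory.Residues" "HOL-Computational_Algebra.Polynomial"
begin

(*
  Write K = F_q and K\<theta> = \<theta>K; then F_(q^2) = K \<oplus> K\<theta>, and the affine points of U_\<theta> are
  those with ordinate in K\<theta>. Since \<theta>^(q+1) is a nonsquare in K, f y \<in> K\<theta> forces y = 0.
  Together with planarity, a second moment count of the level sets {y. f y \<in> c + K\<theta>}, c \<in> K,
  shows that each line L a b with b \<notin> K\<theta> meets U_\<theta> in q + 1 points.

  For f x = x^(s+1), where x \<mapsto> x^s is an automorphism of odd order, f maps the nonzero
  elements onto the nonzero squares, so \<theta> = f \<kappa> * \<nu> with \<nu> a nonsquare fixed by x \<mapsto> x^s.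
  Then f (\<kappa> z) = f \<kappa> * z^2 for every fixed z, and the four lines
  L (\<plusminus>\<kappa>(1-\<nu>)) (f \<kappa> (1-\<nu>)^2) and L (\<plusminus>\<kappa>(1+\<nu>)) (f \<kappa> (1+\<nu>)^2 - 8\<theta>) are blocks meeting
  pairwise in the six distinct points (0,0), (0,8\<theta>), (\<plusminus>2\<kappa>,4\<theta>), (\<plusminus>2\<kappa>\<nu>,4\<theta>).
*)

section \<open>Finite fields\<close>

lemma prime_CHAR_finite_field: "prime CHAR('a::{field,finite})"
  by (simp add: finite_imp_CHAR_pos prime_CHAR_semidom)

lemma CHAR_eq_if_card_prime_power:
  assumes "prime p" and "card (UNIV :: 'a::{field,finite} set) = p ^ m"
  shows "CHAR('a) = p"
proof -
  have "CHAR('a) dvd p ^ m"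
    using CHAR_dvd_CARD assms(2) by metis
  then have "CHAR('a) dvd p"
    using prime_CHAR_finite_field prime_dvd_power by blast
  then show ?thesis
    using assms(1) prime_CHAR_finite_field[where 'a = 'a] by (simp add: primes_dvd_imp_eq)
qed

lemma power_card_eq_self: "(x::'a::{field,finite}) ^ card (UNIV :: 'a set) = x"
proof (cases "x = 0")
  case False
  let ?U = "UNIV - {0} :: 'a set"
  have "(\<Prod>y\<in>?U. x * y) = \<Prod>?U"
    using False by (intro prod.reindex_bij_witness[of _ "\<lambda>y. y / x" "(*) x"]) auto
  then have "x ^ card ?U = 1"
    by (simp add: prod.distrib)
  moreover have "card (UNIV :: 'a set) = Suc (card ?U)"
    by (simp add: card_Diff_singleton finite_UNIV_card_ge_0)
  ultimately show ?thesis
    by (metis power_Suc mult_1_right)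
qed (simp add: finite_UNIV_card_ge_0)

lemma power_card_power_eq_self: "(x::'a::{field,finite}) ^ (card (UNIV :: 'a set) ^ j) = x"
  by (induction j) (simp_all add: power_mult power_card_eq_self)

lemma power_power_div_gcd_eq_self:
  assumes "card (UNIV :: 'a::{field,finite} set) = c ^ m"
  shows "(x::'a) ^ ((c ^ k) ^ (m div gcd m k)) = x"
proof -
  have "k * (m div gcd m k) = m * (k div gcd m k)"
    by (simp add: div_mult_swap mult.commute)
  then have "(c ^ k) ^ (m div gcd m k) = card (UNIV :: 'a set) ^ (k div gcd m k)"
    by (simp add: assms flip: power_mult)
  then show ?thesis
    by (simp add: power_card_power_eq_self)
qed

lemma frobenius_add:
  "s = CHAR('a) ^ j \<Longrightarrow> (x + y :: 'a::{field,finite}) ^ s = x ^ s + y ^ s"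
  by (rule freshmans_dream') (simp_all add: prime_CHAR_finite_field)

lemma frobenius_diff:
  assumes "s = CHAR('a) ^ j"
  shows "(x - y :: 'a::{field,finite}) ^ s = x ^ s - y ^ s"
  using frobenius_add[OF assms, of "x - y" y] by (simp add: eq_diff_eq)

lemma card_power_eq_mult_le:
  assumes "2 \<le> q"
  shows "card {x :: 'a::idom. x ^ q = c * x} \<le> q"
proof -
  let ?P = "monom 1 q - [:0, c:]"
  have "degree ?P = q"
    using assms by (simp add: diff_conv_add_uminus degree_add_eq_left degree_monom_eq)
  moreover have "?P \<noteq> 0"
    using \<open>degree ?P = q\<close> assms by auto
  moreover have "{x. x ^ q = c * x} = {x. poly ?P x = 0}"
    by (auto simp: poly_monom mult.commute)
  ultimately show ?thesis
    using card_poly_roots_bound[of ?P] by simp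
qed

lemma neg_eq_self_iff: "(2::'a::idom) \<noteq> 0 \<Longrightarrow> - x = x \<longleftrightarrow> x = (0::'a)"
  by (metis add_eq_0_iff2 mult_2 mult_eq_0_iff minus_zero)

lemma distinct_plus_minus_one:
  fixes \<nu> :: "'a::idom"
  assumes "2 \<noteq> (0::'a)" and "\<nu> \<notin> {0, 1, -1}"
  shows "distinct [\<nu>, -1, 1, - \<nu>]" and "distinct [0, 1 - \<nu>, \<nu> - 1, - 1 - \<nu>, 1 + \<nu>]"
proof -
  have "\<nu> \<noteq> - \<nu>" "- 1 \<noteq> (1::'a)"
    using neg_eq_self_iff[OF assms(1), of \<nu>] neg_eq_self_iff[OF assms(1), of 1] assms(2) by auto
  moreover have "- 1 \<noteq> - \<nu>" "1 \<noteq> - \<nu>"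
    using assms(2) by (auto simp: equation_minus_iff)
  ultimately show "distinct [\<nu>, -1, 1, - \<nu>]"
    using assms(2) by simp
  show "distinct [0, 1 - \<nu>, \<nu> - 1, - 1 - \<nu>, 1 + \<nu>]"
    using assms mult_eq_0_iff[of 2 "1 + \<nu>"] neg_eq_self_iff[OF assms(1)] by (auto simp: algebra_simps add_eq_0_iff)
qed

lemma card_range_mult_card_kernel:
  fixes T :: "'b::{ab_group_add,finite} \<Rightarrow> 'c::ab_group_add"
  assumes additive: "\<And>x y. T (x + y) = T x + T y"
  shows "card (range T) * card {x. T x = 0} = card (UNIV :: 'b set)"
proof -
  have fibre: "{x. T x = T z} = (+) z ` {x. T x = 0}" for z
  proof (intro equalityI subsetI)
    fix x assume "x \<in> {x. T x = T z}"
    then have "T (x - z) = 0"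
      using additive[of z "x - z"] by simp
    then show "x \<in> (+) z ` {x. T x = 0}"
      by (intro image_eqI[of _ _ "x - z"]) auto
  qed (auto simp: additive)
  have "card (UNIV :: 'b set) = card (\<Union>w\<in>range T. {x. T x = w})"
    by (rule arg_cong[where f = card]) auto
  also have "\<dots> = (\<Sum>w\<in>range T. card {x. T x = w})"
    by (rule card_UN_disjoint) auto
  also have "\<dots> = (\<Sum>w\<in>range T. card {x. T x = 0})"
    by (intro sum.cong) (auto simp: fibre card_image)
  finally show ?thesis
    by simp
qed

lemma card_eq_double_card_image:
  assumes "finite A"
    and neg: "\<And>x. x \<in> A \<Longrightarrow> - x \<in> A \<and> - x \<noteq> x"
    and fibres: "\<And>x y. x \<in> A \<Longrightarrow> y \<in> A \<Longrightarrow> g y = g x \<longleftrightarrow> y = x \<or> y = - x"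
  shows "card A = 2 * card (g ` A)"
proof -
  have "card A = (\<Sum>w\<in>g ` A. card {x \<in> A. g x = w})"
    using sum.group[of A "g ` A" g "\<lambda>_. 1::nat"] \<open>finite A\<close> by simp
  also have "\<dots> = (\<Sum>w\<in>g ` A. 2)"
  proof (intro sum.cong refl)
    fix w assume "w \<in> g ` A"
    then obtain x where "x \<in> A" "w = g x"
      by blast
    then have "{y \<in> A. g y = w} = {x, - x}"
      using fibres[OF \<open>x \<in> A\<close>] neg[OF \<open>x \<in> A\<close>] by auto
    then show "card {y \<in> A. g y = w} = 2"
      using neg[OF \<open>x \<in> A\<close>] by (simp add: eq_commute[of x])
  qed
  finally show ?thesis
    by simp
qed

lemma card_nonzero_eq_double_card_squares:
  assumes "(2::'a::{field,finite}) \<noteq> 0"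
  shows "card (UNIV - {0::'a}) = 2 * card ((\<lambda>z. z ^ 2) ` (UNIV - {0::'a}))"
  by (rule card_eq_double_card_image) (auto simp: power2_eq_iff neg_eq_self_iff[OF assms])

lemma nonsquare_eq_mult_square:
  fixes x y :: "'a::{field,finite}"
  assumes "2 \<noteq> (0::'a)" and "x \<noteq> 0" "y \<noteq> 0"
    and "x \<notin> range (\<lambda>z. z ^ 2)" "y \<notin> range (\<lambda>z. z ^ 2)"
  shows "\<exists>z. y = x * z ^ 2"
proof -
  define SQ where "SQ = (\<lambda>z. z ^ 2) ` (UNIV - {0::'a})"
  define NS where "NS = UNIV - {0} - SQ"
  have "SQ \<subseteq> UNIV - {0}"
    by (auto simp: SQ_def)
  then have "card NS = card SQ"
    using card_nonzero_eq_double_card_squares[OF assms(1)]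
    by (simp add: NS_def SQ_def card_Diff_subset)
  moreover have "(*) x ` SQ \<subseteq> NS"
  proof
    fix u assume "u \<in> (*) x ` SQ"
    then obtain z where z: "z \<noteq> 0" "u = x * z ^ 2"
      by (auto simp: SQ_def)
    have "u \<notin> range (\<lambda>w. w ^ 2)"
    proof
      assume "u \<in> range (\<lambda>w. w ^ 2)"
      then obtain w where "x * z ^ 2 = w ^ 2"
        using z by auto
      then have "x = (w / z) ^ 2"
        using z by (simp add: power_divide field_simps)
      then show False
        using assms(4) by auto
    qed
    then show "u \<in> NS"
      using z assms(2) by (auto simp: NS_def SQ_def)
  qed
  moreover have "inj_on ((*) x) SQ"
    using assms(2) by (auto intro: inj_onI)
  ultimately have "(*) x ` SQ = NS"
    by (intro card_subset_eq) (auto simp: card_image)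
  moreover have "y \<in> NS"
    using assms(3,5) by (auto simp: NS_def SQ_def)
  ultimately show ?thesis
    by (auto simp: SQ_def)
qed

lemma sum_squares_eq_imp_const:
  fixes N :: "'b \<Rightarrow> nat"
  assumes "finite A"
    and sum: "(\<Sum>c\<in>A. N c) = card A * m"
    and sum_sq: "(\<Sum>c\<in>A. N c ^ 2) = card A * m ^ 2"
    and "c \<in> A"
  shows "N c = m"
proof -
  let ?D = "\<lambda>c. (int (N c) - int m) ^ 2"
  have "(\<Sum>c\<in>A. ?D c) = (\<Sum>c\<in>A. int (N c ^ 2)) - 2 * int m * (\<Sum>c\<in>A. int (N c)) + int (card A) * int m ^ 2"
    by (simp add: power2_diff sum.distrib sum_subtractf sum_distrib_left algebra_simps)
  also have "\<dots> = 0"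
    using arg_cong[OF sum, of int] arg_cong[OF sum_sq, of int]
    by (simp add: of_nat_sum power2_eq_square algebra_simps)
  finally have "?D c = 0"
    using sum_nonneg_eq_0_iff[OF \<open>finite A\<close>, of ?D] \<open>c \<in> A\<close> by simp
  then show ?thesis
    by simp
qed

lemma power_power_commute: "((x::'a::monoid_mult) ^ m) ^ n = (x ^ n) ^ m"
  by (simp flip: power_mult add: mult.commute)

lemma power_power_eq_if_swap:
  fixes x y :: "'a::monoid_mult"
  assumes "x ^ s = y" and "y ^ s = x"
  shows "x ^ (s ^ j) = (if even j then x else y)"
  by (induction j) (simp_all add: power_mult assms mult.commute[of s])

section \<open>Planar functions and O'Nan configurations\<close>

definition planar :: "('a::ring \<Rightarrow> 'a) \<Rightarrow> bool" where
  "planar f \<longleftrightarrow> (\<forall>a. a \<noteq> 0 \<longrightarrow> bij (\<lambda>x. f (x + a) - f x))"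

lemma L_inter_L_eq_singleton:
  assumes "planar f" and "a \<noteq> a'"
    and "P \<in> pts f (L a b)" and "P \<in> pts f (L a' b')"
  shows "pts f (L a b) \<inter> pts f (L a' b') = {P}"
proof -
  let ?D = "\<lambda>u. f (u + (a - a')) - f u"
  have "inj ?D"
    using assms(1,2) by (simp add: planar_def bij_is_inj)
  have common: "\<exists>x. Q = Aff x (f (x + a) - b) \<and> ?D (x + a') = b - b'"
    if on_both: "Q \<in> pts f (L a b)" "Q \<in> pts f (L a' b')" for Q
  proof -
    obtain x y where Q: "Q = Aff x y"
      using on_both assms(2) by (cases Q) auto
    have y: "y = f (x + a) - b" "y = f (x + a') - b'"
      using on_both Q by auto
    then have "f (x + a) - f (x + a') = b - b'"
      by (simp add: algebra_simps)
    moreover have "x + a' + (a - a') = x + a"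
      by simp
    ultimately show ?thesis
      using Q y(1) by auto
  qed
  obtain x where x: "P = Aff x (f (x + a) - b)" "?D (x + a') = b - b'"
    using common assms(3,4) by blast
  have "Q = P" if on_both: "Q \<in> pts f (L a b)" "Q \<in> pts f (L a' b')" for Q
  proof -
    obtain z where z: "Q = Aff z (f (z + a) - b)" "?D (z + a') = b - b'"
      using common on_both by blast
    then have "?D (z + a') = ?D (x + a')"
      using x(2) by simp
    then have "z + a' = x + a'"
      by (rule injD[OF \<open>inj ?D\<close>])
    then show ?thesis
      using x(1) z(1) by simp
  qed
  then show ?thesis
    using assms(3,4) by blast
qed

lemma has_ONanI:
  assumes "is_block f q U B1" "is_block f q U B2" "is_block f q U B3" "is_block f q U B4"
    and "B1 \<inter> B2 = {P12}" "B1 \<inter> B3 = {P13}" "B1 \<inter> B4 = {P14}"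
    and "B2 \<inter> B3 = {P23}" "B2 \<inter> B4 = {P24}" "B3 \<inter> B4 = {P34}"
    and "distinct [P12, P13, P14, P23, P24, P34]"
  shows "has_ONan f q U"
proof -
  define B where "B i = [B1, B2, B3, B4] ! i" for i
  define P where "P i j =
    (if {i, j} = {0, 1} then P12 else if {i, j} = {0, 2} then P13 else if {i, j} = {0, 3} then P14
     else if {i, j} = {1, 2} then P23 else if {i, j} = {1, 3} then P24 else P34)" for i j :: nat
  have four: "i < 4 \<longleftrightarrow> i = 0 \<or> i = 1 \<or> i = 2 \<or> i = (3::nat)" for i
    by auto
  have "{(i, j). i < j \<and> j < (4::nat)} = {(0, 1), (0, 2), (0, 3), (1, 2), (1, 3), (2, 3)}"
    by auto
  then have "inj_on (\<lambda>(i, j). P i j) {(i, j). i < j \<and> j < 4}"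
    using assms(11) by (auto simp: inj_on_def P_def doubleton_eq_iff)
  moreover have "\<forall>i<4. \<forall>j<4. i \<noteq> j \<longrightarrow> B i \<inter> B j = {P i j}"
    using assms(5-10) by (auto simp: four B_def P_def doubleton_eq_iff Int_commute)
  moreover have "\<forall>i<4. is_block f q U (B i)"
    using assms(1-4) by (auto simp: four B_def)
  ultimately show ?thesis
    unfolding has_ONan_def by blast
qed

section \<open>The subfield F_q and the coset \<theta>F_q\<close>

locale quadratic_extension =
  fixes q :: nat and \<theta> :: "'a::{field,finite}"
  assumes card_UNIV: "card (UNIV :: 'a set) = q * q"
    and q_char_power: "\<exists>m. q = CHAR('a) ^ m"
    and theta_notin_subfield: "\<theta> \<notin> subfield_q q"
begin

abbreviation K :: "'a set" where "K \<equiv> subfield_q q"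

definition K\<theta> :: "'a set" where "K\<theta> = (\<lambda>t. t * \<theta>) ` K"

lemma two_le_q: "2 \<le> q"
proof (rule ccontr)
  assume "\<not> 2 \<le> q"
  then have "card (UNIV :: 'a set) \<le> 1 * 1"
    unfolding card_UNIV by (intro mult_le_mono) auto
  moreover have "card {0, 1 :: 'a} \<le> card (UNIV :: 'a set)"
    by (rule card_mono) auto
  ultimately show False
    by simp
qed

lemma power_q_add: "(x + y :: 'a) ^ q = x ^ q + y ^ q"
  using q_char_power frobenius_add by blast

lemma power_q_diff: "(x - y :: 'a) ^ q = x ^ q - y ^ q"
  using q_char_power frobenius_diff by blast

lemma power_q_power_q: "((x :: 'a) ^ q) ^ q = x"
  using power_card_eq_self[of x] by (simp add: card_UNIV power_mult)

lemma mem_K_iff: "x \<in> K \<longleftrightarrow> x ^ q = x"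
  by (simp add: subfield_q_def)

lemma K_add: "x \<in> K \<Longrightarrow> y \<in> K \<Longrightarrow> x + y \<in> K"
  by (simp add: mem_K_iff power_q_add)

lemma K_diff: "x \<in> K \<Longrightarrow> y \<in> K \<Longrightarrow> x - y \<in> K"
  by (simp add: mem_K_iff power_q_diff)

lemma K_divide: "x \<in> K \<Longrightarrow> y \<in> K \<Longrightarrow> x / y \<in> K"
  by (simp add: mem_K_iff power_divide)

lemma K_power: "x \<in> K \<Longrightarrow> x ^ j \<in> K"
  by (simp add: mem_K_iff flip: power_mult) (metis power_mult mult.commute)

lemma zero_mem_K: "0 \<in> K"
  using two_le_q by (simp add: mem_K_iff)

lemma one_mem_K: "1 \<in> K"
  by (simp add: mem_K_iff)

lemma of_nat_mem_K: "of_nat j \<in> K"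
  by (induction j) (simp_all add: zero_mem_K K_add[OF one_mem_K])

lemma norm_mem_K: "y ^ (q + 1) \<in> K"
  by (simp add: mem_K_iff power_mult_distrib power_q_power_q mult.commute)

lemma card_K: "card K = q"
proof (rule antisym)
  show "card K \<le> q"
    using card_power_eq_mult_le[OF two_le_q, of 1] by (simp add: subfield_q_def)
next
  let ?tr = "\<lambda>x::'a. x + x ^ q"
  have range_tr: "range ?tr \<subseteq> K"
    by (auto simp: mem_K_iff power_q_add power_q_power_q)
  have kernel_tr: "card {x. ?tr x = 0} \<le> q"
    using card_power_eq_mult_le[OF two_le_q, of "-1"] by (simp add: add_eq_0_iff)
  have "q * q = card (range ?tr) * card {x. ?tr x = 0}"
    using card_range_mult_card_kernel[of ?tr] by (simp add: card_UNIV power_q_add add_ac)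
  also have "\<dots> \<le> card K * q"
    using range_tr kernel_tr by (intro mult_le_mono card_mono) auto
  finally show "q \<le> card K"
    using two_le_q by simp
qed

lemma theta_nonzero: "\<theta> \<noteq> 0"
  using theta_notin_subfield zero_mem_K by auto

lemma mem_K\<theta>_iff: "z \<in> K\<theta> \<longleftrightarrow> z / \<theta> \<in> K"
  using theta_nonzero by (auto simp: K\<theta>_def intro: image_eqI[of _ _ "z / \<theta>"])

lemma mult_theta_mem_K\<theta>: "t \<in> K \<Longrightarrow> t * \<theta> \<in> K\<theta>"
  unfolding K\<theta>_def by (rule imageI)

lemma zero_mem_K\<theta>: "0 \<in> K\<theta>"
  using mult_theta_mem_K\<theta>[OF zero_mem_K] by simp

lemma theta_mem_K\<theta>: "\<theta> \<in> K\<theta>"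
  using mult_theta_mem_K\<theta>[OF one_mem_K] by simp

lemma K\<theta>_add: "x \<in> K\<theta> \<Longrightarrow> y \<in> K\<theta> \<Longrightarrow> x + y \<in> K\<theta>"
  by (simp add: mem_K\<theta>_iff add_divide_distrib K_add)

lemma K\<theta>_diff: "x \<in> K\<theta> \<Longrightarrow> y \<in> K\<theta> \<Longrightarrow> x - y \<in> K\<theta>"
  by (simp add: mem_K\<theta>_iff diff_divide_distrib K_diff)

lemma card_K\<theta>: "card K\<theta> = q"
  using theta_nonzero by (simp add: K\<theta>_def card_image inj_on_def card_K)

lemma K_inter_K\<theta>:
  assumes "c \<in> K" and "c \<in> K\<theta>"
  shows "c = 0"
proof (rule ccontr)
  assume "c \<noteq> 0"
  have "c / \<theta> \<in> K"
    using assms(2) by (simp add: mem_K\<theta>_iff)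
  then have "c / (c / \<theta>) \<in> K"
    by (rule K_divide[OF assms(1)])
  moreover have "c / (c / \<theta>) = \<theta>"
    using \<open>c \<noteq> 0\<close> theta_nonzero by simp
  ultimately show False
    using theta_notin_subfield by simp
qed

lemma K_plus_K\<theta>: "\<exists>c\<in>K. z - c \<in> K\<theta>"
proof -
  let ?\<phi> = "\<lambda>(a, b). a + b * \<theta>"
  have "inj_on ?\<phi> (K \<times> K)"
  proof (rule inj_onI, clarify)
    fix a b a' b' assume ab: "a \<in> K" "b \<in> K" "a' \<in> K" "b' \<in> K" "a + b * \<theta> = a' + b' * \<theta>"
    then have "(b - b') * \<theta> = a' - a"
      by (simp add: algebra_simps)
    moreover have "(b - b') * \<theta> \<in> K\<theta>"
      using ab by (simp add: K_diff mult_theta_mem_K\<theta>)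
    ultimately have "a' - a \<in> K\<theta>"
      by simp
    then have "(b - b') * \<theta> = 0"
      using K_inter_K\<theta>[OF K_diff[OF ab(3,1)]] \<open>(b - b') * \<theta> = a' - a\<close> by simp
    then show "a = a' \<and> b = b'"
      using ab(5) theta_nonzero by simp
  qed
  then have "?\<phi> ` (K \<times> K) = UNIV"
    by (intro card_subset_eq) (simp_all add: card_image card_cartesian_product card_K card_UNIV)
  then have "z \<in> ?\<phi> ` (K \<times> K)"
    by simp
  then obtain a b where "a \<in> K" "b \<in> K" "z = a + b * \<theta>"
    by auto
  then show ?thesis
    using mult_theta_mem_K\<theta> by force
qed

lemma K_plus_K\<theta>_unique:
  assumes "c \<in> K" "c' \<in> K" "z - c \<in> K\<theta>" "z - c' \<in> K\<theta>"
  shows "c = c'"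
proof -
  have "c' - c \<in> K\<theta>"
    using K\<theta>_diff[OF assms(3,4)] by simp
  then show ?thesis
    using K_inter_K\<theta> K_diff[OF assms(2,1)] by force
qed

lemma Aff_mem_U_theta_iff [simp]: "Aff x y \<in> U_theta q \<theta> \<longleftrightarrow> y \<in> K\<theta>"
  by (auto simp: U_theta_def K\<theta>_def)

lemma Dir_notin_U_theta [simp]: "Dir a \<notin> U_theta q \<theta>"
  by (simp add: U_theta_def)

end

section \<open>Lines meeting U_\<theta> in q + 1 points\<close>

locale theta_unital = quadratic_extension q \<theta> for q and \<theta> :: "'a::{field,finite}" +
  fixes f :: "'a \<Rightarrow> 'a"
  assumes planar: "planar f"
    and f_zero: "f 0 = 0"
    and anisotropic: "f y \<in> K\<theta> \<Longrightarrow> y = 0"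
begin

definition level :: "'a \<Rightarrow> 'a set" where "level c = {y. f y - c \<in> K\<theta>}"

lemma level_eq_if_diff_mem: "b - c \<in> K\<theta> \<Longrightarrow> level b = level c"
  using K\<theta>_add[of "f _ - b" "b - c"] K\<theta>_diff[of "f _ - c" "b - c"] by (fastforce simp: level_def)

lemma level_zero: "level 0 = {0}"
  using anisotropic f_zero zero_mem_K\<theta> by (auto simp: level_def)

lemma disjoint_level: "c \<in> K \<Longrightarrow> c' \<in> K \<Longrightarrow> c \<noteq> c' \<Longrightarrow> level c \<inter> level c' = {}"
  using K_plus_K\<theta>_unique by (auto simp: level_def)

lemma UN_level: "(\<Union>c\<in>K. level c) = UNIV"
  using K_plus_K\<theta> by (auto simp: level_def)

lemma sum_card_level: "(\<Sum>c\<in>K. card (level c)) = q * q"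
  using card_UN_disjoint[of K level] disjoint_level by (simp add: UN_level card_UNIV)

lemma sum_card_level_squared: "(\<Sum>c\<in>K. card (level c) ^ 2) = card {(x, y). f x - f y \<in> K\<theta>}"
proof -
  have "{(x, y). f x - f y \<in> K\<theta>} = (\<Union>c\<in>K. level c \<times> level c)"
  proof (intro equalityI subsetI; clarify)
    fix x y assume "f x - f y \<in> K\<theta>"
    moreover obtain c where "c \<in> K" "y \<in> level c"
      using UN_level by blast
    ultimately show "(x, y) \<in> (\<Union>c\<in>K. level c \<times> level c)"
      using K\<theta>_add[of "f x - f y" "f y - c"] by (auto simp: level_def)
  qed (use K\<theta>_diff in \<open>fastforce simp: level_def\<close>)
  moreover have "card (\<Union>c\<in>K. level c \<times> level c) = (\<Sum>c\<in>K. card (level c \<times> level c))"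
    by (rule card_UN_disjoint) (use disjoint_level in \<open>auto simp: disjoint_iff\<close>)
  ultimately show ?thesis
    by (simp add: card_cartesian_product power2_eq_square)
qed

text \<open>Writing x = y + e, planarity leaves exactly q choices of y for each e \<noteq> 0.\<close>

lemma card_related_pairs: "card {(x, y). f x - f y \<in> K\<theta>} = q * q + (q * q - 1) * q"
proof -
  let ?G = "\<lambda>e. {y. f (y + e) - f y \<in> K\<theta>}"
  have "{(x, y). f x - f y \<in> K\<theta>} = (\<lambda>(e, y). (y + e, y)) ` (SIGMA e:UNIV. ?G e)"
  proof (intro equalityI subsetI, clarify)
    fix x y assume "f x - f y \<in> K\<theta>"
    then show "(x, y) \<in> (\<lambda>(e, y). (y + e, y)) ` (SIGMA e:UNIV. ?G e)"
      by (intro image_eqI[of _ _ "(x - y, y)"]) auto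
  qed auto
  moreover have "inj_on (\<lambda>(e, y). (y + e, y)) (SIGMA e:UNIV. ?G e)"
    by (auto simp: inj_on_def)
  ultimately have "card {(x, y). f x - f y \<in> K\<theta>} = (\<Sum>e\<in>UNIV. card (?G e))"
    by (simp add: card_image card_SigmaI)
  also have "\<dots> = card (?G 0) + (\<Sum>e\<in>UNIV - {0}. card (?G e))"
    using sum.remove[of UNIV 0 "\<lambda>e. card (?G e)"] by simp
  also have "\<dots> = q * q + (\<Sum>e\<in>UNIV - {0::'a}. q)"
  proof -
    have "card (?G 0) = q * q"
      using zero_mem_K\<theta> by (simp add: card_UNIV)
    moreover have "card (?G e) = q" if "e \<noteq> 0" for e
    proof -
      have "bij (\<lambda>y. f (y + e) - f y)"
        using planar that by (simp add: planar_def)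
      then show ?thesis
        using card_vimage_inj[of "\<lambda>y. f (y + e) - f y" K\<theta>] by (simp add: bij_def vimage_def card_K\<theta>)
    qed
    ultimately show ?thesis
      by simp
  qed
  finally show ?thesis
    by (simp add: card_UNIV card_Diff_singleton)
qed

text \<open>The levels of the q - 1 nonzero c \<in> K have sizes summing to (q - 1)(q + 1) and squares
  summing to (q - 1)(q + 1)^2, so all of them have size q + 1.\<close>

lemma card_level:
  assumes "b \<notin> K\<theta>"
  shows "card (level b) = q + 1"
proof -
  obtain c where c: "c \<in> K" "b - c \<in> K\<theta>"
    using K_plus_K\<theta> by blast
  then have "c \<noteq> 0"
    using assms by auto
  let ?A = "K - {0}"
  have card_A: "card ?A = q - 1"
    using zero_mem_K by (simp add: card_K)
  have "q * q = (q - 1) * (q + 1) + 1" "q * q + (q * q - 1) * q = (q - 1) * (q + 1) ^ 2 + 1"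
    using two_le_q by (cases q; simp add: algebra_simps power2_eq_square)+
  moreover have "(\<Sum>c\<in>K. card (level c)) = 1 + (\<Sum>c\<in>?A. card (level c))"
    "(\<Sum>c\<in>K. card (level c) ^ 2) = 1 + (\<Sum>c\<in>?A. card (level c) ^ 2)"
    using sum.remove[of K 0 "\<lambda>c. card (level c)"] sum.remove[of K 0 "\<lambda>c. card (level c) ^ 2"] zero_mem_K
    by (simp_all add: level_zero)
  ultimately have "(\<Sum>c\<in>?A. card (level c)) = card ?A * (q + 1)"
    "(\<Sum>c\<in>?A. card (level c) ^ 2) = card ?A * (q + 1) ^ 2"
    by (simp_all add: card_A sum_card_level sum_card_level_squared card_related_pairs)
  with sum_squares_eq_imp_const[of ?A "\<lambda>c. card (level c)" "q + 1" c]
  have "card (level c) = q + 1"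
    using c(1) \<open>c \<noteq> 0\<close> by simp
  then show ?thesis
    using level_eq_if_diff_mem[OF c(2)] by simp
qed

lemma is_block_L:
  assumes "b \<notin> K\<theta>"
  shows "is_block f q (U_theta q \<theta>) (U_theta q \<theta> \<inter> pts f (L a b))"
proof -
  have "U_theta q \<theta> \<inter> pts f (L a b) = (\<lambda>y. Aff (y - a) (f y - b)) ` level b"
  proof (intro equalityI subsetI)
    fix P assume "P \<in> U_theta q \<theta> \<inter> pts f (L a b)"
    then obtain x where "P = Aff x (f (x + a) - b)" "f (x + a) - b \<in> K\<theta>"
      by auto
    then show "P \<in> (\<lambda>y. Aff (y - a) (f y - b)) ` level b"
      by (intro image_eqI[of _ _ "x + a"]) (auto simp: level_def)
  qed (auto simp: level_def)
  moreover have "inj_on (\<lambda>y. Aff (y - a) (f y - b)) (level b)"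
    by (auto intro: inj_onI)
  ultimately have "card (U_theta q \<theta> \<inter> pts f (L a b)) = q + 1"
    using card_level[OF assms] by (simp add: card_image)
  then show ?thesis
    unfolding is_block_def by blast
qed

end

section \<open>The planar monomials x^(s+1)\<close>

locale planar_monomial =
  fixes f :: "'a::{field,finite} \<Rightarrow> 'a" and s M :: nat
  assumes odd_char: "odd CHAR('a)"
    and s_char_power: "\<exists>j. s = CHAR('a) ^ j"
    and odd_M: "odd M"
    and power_s_M: "\<And>x::'a. x ^ (s ^ M) = x"
    and f_eq: "f = (\<lambda>x. x ^ (s + 1))"
begin

lemma two_neq_zero: "(2::'a) \<noteq> 0"
proof
  assume "(2::'a) = 0"
  then have "CHAR('a) dvd 2"
    using of_nat_eq_0_iff_char_dvd[where ?'a = 'a, of 2] by simp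
  then show False
    using odd_char prime_CHAR_finite_field[where ?'a = 'a] two_is_prime_nat
    by (metis primes_dvd_imp_eq even_numeral)
qed

lemma odd_s: "odd s"
  using s_char_power odd_char by auto

lemma power_s_add: "(x + y :: 'a) ^ s = x ^ s + y ^ s"
  using s_char_power frobenius_add by blast

lemma power_s_diff: "(x - y :: 'a) ^ s = x ^ s - y ^ s"
  using s_char_power frobenius_diff by blast

lemma power_s_minus: "(- x :: 'a) ^ s = - (x ^ s)"
  using odd_s by (simp add: power_minus_odd)

lemma eq_if_power_s_swap: "(x::'a) ^ s = y \<Longrightarrow> y ^ s = x \<Longrightarrow> x = y"
  using power_power_eq_if_swap[of x s y M] power_s_M odd_M by simp

lemma power_s_eq_minus_imp_zero:
  assumes "(x::'a) ^ s = - x"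
  shows "x = 0"
proof -
  have "x = - x"
    using eq_if_power_s_swap[of x "- x"] assms by (simp add: power_s_minus)
  then show ?thesis
    using neg_eq_self_iff[OF two_neq_zero, of x] by simp
qed

lemma power_s_mult_self_eq_1:
  assumes "(w::'a) ^ s * w = 1"
  shows "w = 1 \<or> w = -1"
proof -
  have "w \<noteq> 0"
    using assms by auto
  have "w ^ s = inverse w"
    using assms by (intro inverse_unique[symmetric]) (simp add: mult.commute)
  then have "w = inverse w"
    using eq_if_power_s_swap[of w "inverse w"] by (simp add: power_inverse)
  then have "w ^ 2 = 1"
    using \<open>w \<noteq> 0\<close> by (simp add: power2_eq_square field_simps)
  then show ?thesis
    by (simp add: power2_eq_1_iff)
qed

lemma power_s_one_plus_minus:
  fixes \<nu> :: 'a
  assumes "\<nu> ^ s = \<nu>"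
  shows "(1 - \<nu>) ^ s = 1 - \<nu>" "(\<nu> - 1) ^ s = \<nu> - 1" "(- 1 - \<nu>) ^ s = - 1 - \<nu>" "(1 + \<nu>) ^ s = 1 + \<nu>"
  by (simp_all add: assms power_s_add power_s_diff power_s_minus)

lemma f_zero: "f 0 = 0"
  by (simp add: f_eq)

lemma f_minus: "f (- x) = f x"
  using odd_s by (simp add: f_eq power_minus_even)

lemma f_mult_fixed: "z ^ s = z \<Longrightarrow> f (x * z) = f x * z ^ 2"
  by (simp add: f_eq power_mult_distrib power2_eq_square)

lemma f_eq_square: "f x = (x ^ (s div 2 + 1)) ^ 2"
proof -
  have "s + 1 = 2 * (s div 2 + 1)"
    using odd_s by presburger
  then show ?thesis
    by (simp only: f_eq power_even_eq)
qed

lemma planar_f: "planar f"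
  unfolding planar_def
proof (intro allI impI)
  fix a :: 'a assume "a \<noteq> 0"
  have diff: "f (x + a) - f x = x * a ^ s + a * x ^ s + f a" for x
    by (simp add: f_eq power_s_add algebra_simps)
  have "x = y" if "f (x + a) - f x = f (y + a) - f y" for x y
  proof -
    have "x * a ^ s + a * x ^ s = y * a ^ s + a * y ^ s"
      using that unfolding diff by simp
    define w where "w = (x - y) / a"
    have "a ^ s * a * (w ^ s + w) = (x - y) * a ^ s + a * (x - y) ^ s"
      using \<open>a \<noteq> 0\<close> by (simp add: w_def power_divide field_simps)
    also have "\<dots> = 0"
      using \<open>x * a ^ s + a * x ^ s = y * a ^ s + a * y ^ s\<close> by (simp add: power_s_diff algebra_simps)
    finally have "w ^ s = - w"
      using \<open>a \<noteq> 0\<close> by (simp add: add_eq_0_iff2)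
    then have "w = 0"
      by (rule power_s_eq_minus_imp_zero)
    then show "x = y"
      using \<open>a \<noteq> 0\<close> unfolding w_def by simp
  qed
  then have "inj (\<lambda>x. f (x + a) - f x)"
    by (rule injI)
  then show "bij (\<lambda>x. f (x + a) - f x)"
    by (simp add: bij_def finite_UNIV_inj_surj)
qed

lemma f_eq_f_iff:
  assumes "x \<noteq> 0" "y \<noteq> 0"
  shows "f y = f x \<longleftrightarrow> y = x \<or> y = - x"
proof
  assume "f y = f x"
  then have "y ^ s * y = x ^ s * x"
    by (simp add: f_eq mult.commute)
  then have "(y / x) ^ s * (y / x) = 1"
    using assms by (simp add: power_divide)
  then have "y / x = 1 \<or> y / x = -1"
    by (rule power_s_mult_self_eq_1)
  then show "y = x \<or> y = - x"
    using assms by (auto simp: field_simps)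
qed (auto simp: f_minus)

lemma image_f_nonzero: "f ` (UNIV - {0}) = (\<lambda>z. z ^ 2) ` (UNIV - {0})"
proof (rule card_subset_eq)
  show "f ` (UNIV - {0}) \<subseteq> (\<lambda>z. z ^ 2) ` (UNIV - {0})"
    by (auto simp: f_eq_square)
  have "card (UNIV - {0::'a}) = 2 * card (f ` (UNIV - {0}))"
    by (rule card_eq_double_card_image) (use two_neq_zero in \<open>auto simp: f_eq_f_iff\<close>)
  then have "2 * card (f ` (UNIV - {0})) = 2 * card ((\<lambda>z. z ^ 2) ` (UNIV - {0::'a}))"
    using card_nonzero_eq_double_card_squares[OF two_neq_zero] by (rule trans[OF sym])
  then show "card (f ` (UNIV - {0})) = card ((\<lambda>z::'a. z ^ 2) ` (UNIV - {0}))"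
    by simp
qed simp

lemma exists_fixed_nonsquare: "\<exists>\<nu>::'a. \<nu> ^ s = \<nu> \<and> \<nu> \<noteq> 0 \<and> \<nu> \<notin> range (\<lambda>z. z ^ 2)"
proof -
  define E where "E = {z::'a. z \<noteq> 0 \<and> z ^ s = z}"
  have card_E: "card E = 2 * card ((\<lambda>z. z ^ 2) ` E)"
    by (rule card_eq_double_card_image) (use two_neq_zero in \<open>auto simp: E_def power2_eq_iff power_s_minus\<close>)
  have "(\<lambda>z. z ^ 2) ` E \<noteq> E"
  proof
    assume "(\<lambda>z. z ^ 2) ` E = E"
    then have "card E = 0"
      using card_E by simp
    moreover have "1 \<in> E"
      by (simp add: E_def)
    ultimately show False
      by auto
  qed
  moreover have "(\<lambda>z. z ^ 2) ` E \<subseteq> E"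
    by (auto simp: E_def power_power_commute)
  ultimately obtain \<nu> where \<nu>: "\<nu> \<in> E" "\<nu> \<notin> (\<lambda>z. z ^ 2) ` E"
    by blast
  \<comment> \<open>A square root z of \<nu> in the whole field would satisfy z^s = \<plusminus>z.\<close>
  have "\<nu> \<notin> range (\<lambda>z. z ^ 2)"
  proof
    assume "\<nu> \<in> range (\<lambda>z. z ^ 2)"
    then obtain z where z: "\<nu> = z ^ 2"
      by blast
    then have "(z ^ s) ^ 2 = z ^ 2"
      using \<nu>(1) by (simp add: E_def flip: power_power_commute)
    then have "z ^ s = z \<or> z ^ s = - z"
      by (simp add: power2_eq_iff)
    moreover have "z \<noteq> 0"
      using \<nu>(1) z by (auto simp: E_def)
    ultimately show False
      using \<nu> z power_s_eq_minus_imp_zero by (auto simp: E_def)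
  qed
  then show ?thesis
    using \<nu>(1) by (intro exI[of _ \<nu>]) (auto simp: E_def)
qed

end

section \<open>The O'Nan configuration\<close>

locale monomial_unital = quadratic_extension q \<theta> + planar_monomial f s M
  for q and \<theta> :: "'a::{field,finite}" and f :: "'a \<Rightarrow> 'a" and s M +
  assumes norm_nonsquare: "\<not> (\<exists>y \<in> subfield_q q. y ^ 2 = \<theta> ^ (q + 1))"
begin

lemma anisotropic:
  assumes "f y \<in> K\<theta>"
  shows "y = 0"
proof (rule ccontr)
  assume "y \<noteq> 0"
  obtain t where t: "t \<in> K" "f y = t * \<theta>"
    using assms by (auto simp: K\<theta>_def)
  then have "t \<noteq> 0"
    using \<open>y \<noteq> 0\<close> by (auto simp: f_eq)
  define w where "w = (y ^ (q + 1)) ^ (s div 2 + 1)"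
  have "w ^ 2 = f y ^ (q + 1)"
    unfolding w_def f_eq_square by (metis power_power_commute)
  also have "\<dots> = t ^ 2 * \<theta> ^ (q + 1)"
    using t by (simp add: power_mult_distrib mem_K_iff power2_eq_square)
  finally have "(w / t) ^ 2 = \<theta> ^ (q + 1)"
    using \<open>t \<noteq> 0\<close> by (simp add: power_divide)
  moreover have "w / t \<in> K"
    unfolding w_def using t(1) by (intro K_divide K_power norm_mem_K)
  ultimately show False
    using norm_nonsquare by blast
qed

sublocale theta_unital q \<theta> f
  using planar_f f_zero anisotropic by unfold_locales

lemma theta_nonsquare: "\<theta> \<notin> range (\<lambda>z. z ^ 2)"
proof
  assume "\<theta> \<in> range (\<lambda>z. z ^ 2)"
  then obtain z where "\<theta> = z ^ 2"
    by blast
  then have "(z ^ (q + 1)) ^ 2 = \<theta> ^ (q + 1)"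
    by (metis power_power_commute)
  then show False
    using norm_nonsquare norm_mem_K by blast
qed

lemma exists_scaling: "\<exists>\<kappa> \<nu>. \<kappa> \<noteq> 0 \<and> \<nu> ^ s = \<nu> \<and> \<nu> \<notin> {0, 1, -1} \<and> \<theta> = f \<kappa> * \<nu>"
proof -
  obtain \<nu> :: 'a where \<nu>: "\<nu> ^ s = \<nu>" "\<nu> \<noteq> 0" "\<nu> \<notin> range (\<lambda>z. z ^ 2)"
    using exists_fixed_nonsquare by blast
  obtain z where "\<theta> = \<nu> * z ^ 2"
    using nonsquare_eq_mult_square[OF two_neq_zero \<nu>(2) theta_nonzero \<nu>(3) theta_nonsquare] by blast
  moreover have "z ^ 2 \<in> f ` (UNIV - {0})"
    using calculation theta_nonzero by (auto simp: image_f_nonzero)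
  ultimately obtain \<kappa> where "\<kappa> \<noteq> 0" "\<theta> = f \<kappa> * \<nu>"
    by (auto simp: mult.commute)
  moreover have "\<nu> \<noteq> 1"
    using \<nu>(3) by (metis power_one rangeI)
  moreover have "\<nu> \<noteq> -1"
  proof
    assume "\<nu> = -1"
    then have "f \<kappa> \<in> K\<theta>"
      using \<open>\<theta> = f \<kappa> * \<nu>\<close> K\<theta>_diff[OF zero_mem_K\<theta> theta_mem_K\<theta>] by simp
    then show False
      using anisotropic \<open>\<kappa> \<noteq> 0\<close> by blast
  qed
  ultimately show ?thesis
    using \<nu> by blast
qed

text \<open>\<open>line \<kappa> u c\<close> passes through (0, c); for z fixed by x \<mapsto> x^s, its point with abscissa
  \<kappa>(z - u) has ordinate f \<kappa> (z^2 - u^2) + c.\<close>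

definition line :: "'a \<Rightarrow> 'a \<Rightarrow> 'a \<Rightarrow> 'a ln" where
  "line \<kappa> u c = L (\<kappa> * u) (f \<kappa> * u ^ 2 - c)"

lemma Aff_mem_lineI:
  assumes "z ^ s = z" and "x = \<kappa> * (z - u)" and "y = f \<kappa> * (z ^ 2 - u ^ 2) + c"
  shows "Aff x y \<in> pts f (line \<kappa> u c)"
  using assms f_mult_fixed[of z \<kappa>] by (simp add: line_def algebra_simps)

lemma is_block_line:
  assumes "\<kappa> \<noteq> 0" and "u ^ s = u" "u \<noteq> 0" and "c \<in> K\<theta>"
  shows "is_block f q (U_theta q \<theta>) (U_theta q \<theta> \<inter> pts f (line \<kappa> u c))"
proof -
  have "f \<kappa> * u ^ 2 - c \<notin> K\<theta>"
    using anisotropic[of "\<kappa> * u"] K\<theta>_add[of "f \<kappa> * u ^ 2 - c" c] f_mult_fixed[of u \<kappa>] assms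
    by auto
  then show ?thesis
    unfolding line_def by (rule is_block_L)
qed

lemma line_inter_line:
  assumes "\<kappa> \<noteq> 0" and "u \<noteq> u'"
    and "P \<in> U_theta q \<theta>" "P \<in> pts f (line \<kappa> u c)" "P \<in> pts f (line \<kappa> u' c')"
  shows "(U_theta q \<theta> \<inter> pts f (line \<kappa> u c)) \<inter> (U_theta q \<theta> \<inter> pts f (line \<kappa> u' c')) = {P}"
proof -
  have "\<kappa> * u \<noteq> \<kappa> * u'"
    using assms(1,2) by simp
  from L_inter_L_eq_singleton[OF planar_f this] assms(3-5) show ?thesis
    unfolding line_def by blast
qed

lemma ONan_incidences:
  assumes "\<nu> ^ s = \<nu>" and \<theta>: "\<theta> = f \<kappa> * \<nu>"
  shows "Aff 0 0 \<in> pts f (line \<kappa> (1 - \<nu>) 0)" "Aff 0 0 \<in> pts f (line \<kappa> (\<nu> - 1) 0)"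
    and "Aff (2 * \<kappa> * \<nu>) (4 * \<theta>) \<in> pts f (line \<kappa> (1 - \<nu>) 0)"
      "Aff (2 * \<kappa> * \<nu>) (4 * \<theta>) \<in> pts f (line \<kappa> (- 1 - \<nu>) (8 * \<theta>))"
    and "Aff (- 2 * \<kappa>) (4 * \<theta>) \<in> pts f (line \<kappa> (1 - \<nu>) 0)"
      "Aff (- 2 * \<kappa>) (4 * \<theta>) \<in> pts f (line \<kappa> (1 + \<nu>) (8 * \<theta>))"
    and "Aff (2 * \<kappa>) (4 * \<theta>) \<in> pts f (line \<kappa> (\<nu> - 1) 0)"
      "Aff (2 * \<kappa>) (4 * \<theta>) \<in> pts f (line \<kappa> (- 1 - \<nu>) (8 * \<theta>))"
    and "Aff (- 2 * \<kappa> * \<nu>) (4 * \<theta>) \<in> pts f (line \<kappa> (\<nu> - 1) 0)"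
      "Aff (- 2 * \<kappa> * \<nu>) (4 * \<theta>) \<in> pts f (line \<kappa> (1 + \<nu>) (8 * \<theta>))"
    and "Aff 0 (8 * \<theta>) \<in> pts f (line \<kappa> (- 1 - \<nu>) (8 * \<theta>))"
      "Aff 0 (8 * \<theta>) \<in> pts f (line \<kappa> (1 + \<nu>) (8 * \<theta>))"
proof -
  note fixed = power_s_one_plus_minus[OF assms(1)]
  note on_line = Aff_mem_lineI[OF fixed(1)] Aff_mem_lineI[OF fixed(2)]
    Aff_mem_lineI[OF fixed(3)] Aff_mem_lineI[OF fixed(4)]
  show "Aff 0 0 \<in> pts f (line \<kappa> (1 - \<nu>) 0)" "Aff 0 0 \<in> pts f (line \<kappa> (\<nu> - 1) 0)"
    "Aff 0 (8 * \<theta>) \<in> pts f (line \<kappa> (- 1 - \<nu>) (8 * \<theta>))"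
    "Aff 0 (8 * \<theta>) \<in> pts f (line \<kappa> (1 + \<nu>) (8 * \<theta>))"
    by (rule on_line(1) on_line(2) on_line(3) on_line(4); simp add: power2_eq_square algebra_simps)+
  show "Aff (2 * \<kappa> * \<nu>) (4 * \<theta>) \<in> pts f (line \<kappa> (1 - \<nu>) 0)"
      "Aff (- 2 * \<kappa>) (4 * \<theta>) \<in> pts f (line \<kappa> (1 - \<nu>) 0)"
      "Aff (2 * \<kappa>) (4 * \<theta>) \<in> pts f (line \<kappa> (\<nu> - 1) 0)"
      "Aff (- 2 * \<kappa> * \<nu>) (4 * \<theta>) \<in> pts f (line \<kappa> (\<nu> - 1) 0)"
    by (rule on_line(4) on_line(3); simp add: \<theta> algebra_simps power2_eq_square)+
  show "Aff (2 * \<kappa> * \<nu>) (4 * \<theta>) \<in> pts f (line \<kappa> (- 1 - \<nu>) (8 * \<theta>))"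
      "Aff (2 * \<kappa>) (4 * \<theta>) \<in> pts f (line \<kappa> (- 1 - \<nu>) (8 * \<theta>))"
      "Aff (- 2 * \<kappa>) (4 * \<theta>) \<in> pts f (line \<kappa> (1 + \<nu>) (8 * \<theta>))"
      "Aff (- 2 * \<kappa> * \<nu>) (4 * \<theta>) \<in> pts f (line \<kappa> (1 + \<nu>) (8 * \<theta>))"
    by (rule on_line(2) on_line(1); simp add: \<theta> algebra_simps power2_eq_square)+
qed

lemma has_ONan_if_scaling:
  assumes \<kappa>: "\<kappa> \<noteq> 0" and \<nu>: "\<nu> ^ s = \<nu>" "\<nu> \<notin> {0, 1, -1}" and \<theta>: "\<theta> = f \<kappa> * \<nu>"
  shows "has_ONan f q (U_theta q \<theta>)"
proof -
  note distinct = distinct_plus_minus_one[OF two_neq_zero \<nu>(2)]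
  have "distinct (map ((*) (2 * \<kappa>)) [\<nu>, -1, 1, - \<nu>])"
    using distinct(1) \<kappa> two_neq_zero by (simp only: distinct_map) (auto simp: inj_on_def)
  moreover have "(4::'a) \<noteq> 0" "(8::'a) \<noteq> 0"
    using power_not_zero[OF two_neq_zero, of 2] power_not_zero[OF two_neq_zero, of 3] by simp_all
  ultimately have points: "distinct [Aff 0 0, Aff (2 * \<kappa> * \<nu>) (4 * \<theta>), Aff (- 2 * \<kappa>) (4 * \<theta>),
      Aff (2 * \<kappa>) (4 * \<theta>), Aff (- 2 * \<kappa> * \<nu>) (4 * \<theta>), Aff 0 (8 * \<theta>)]"
    using theta_nonzero by auto
  have u_neq: "1 - \<nu> \<noteq> \<nu> - 1" "1 - \<nu> \<noteq> - 1 - \<nu>" "1 - \<nu> \<noteq> 1 + \<nu>"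
    "\<nu> - 1 \<noteq> - 1 - \<nu>" "\<nu> - 1 \<noteq> 1 + \<nu>" "- 1 - \<nu> \<noteq> 1 + \<nu>"
    and u_nonzero: "1 - \<nu> \<noteq> 0" "\<nu> - 1 \<noteq> 0" "- 1 - \<nu> \<noteq> 0" "1 + \<nu> \<noteq> 0"
    using distinct(2) by auto
  note fixed = power_s_one_plus_minus[OF \<nu>(1)]
  have in_K\<theta>: "0 \<in> K\<theta>" "4 * \<theta> \<in> K\<theta>" "8 * \<theta> \<in> K\<theta>"
    using mult_theta_mem_K\<theta>[OF of_nat_mem_K, of 4] mult_theta_mem_K\<theta>[OF of_nat_mem_K, of 8]
    by (simp_all add: zero_mem_K\<theta>)
  then have in_U: "Aff 0 0 \<in> U_theta q \<theta>" "Aff x (4 * \<theta>) \<in> U_theta q \<theta>" "Aff 0 (8 * \<theta>) \<in> U_theta q \<theta>" for x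
    by simp_all
  note incidences = ONan_incidences[OF \<nu>(1) \<theta>]
  show ?thesis
    by (rule has_ONanI[OF
          is_block_line[OF \<kappa> fixed(1) u_nonzero(1) in_K\<theta>(1)] is_block_line[OF \<kappa> fixed(2) u_nonzero(2) in_K\<theta>(1)]
          is_block_line[OF \<kappa> fixed(3) u_nonzero(3) in_K\<theta>(3)] is_block_line[OF \<kappa> fixed(4) u_nonzero(4) in_K\<theta>(3)]
          line_inter_line[OF \<kappa> u_neq(1) in_U(1) incidences(1,2)]
          line_inter_line[OF \<kappa> u_neq(2) in_U(2) incidences(3,4)]
          line_inter_line[OF \<kappa> u_neq(3) in_U(2) incidences(5,6)]
          line_inter_line[OF \<kappa> u_neq(4) in_U(2) incidences(7,8)]
          line_inter_line[OF \<kappa> u_neq(5) in_U(2) incidences(9,10)]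
          line_inter_line[OF \<kappa> u_neq(6) in_U(3) incidences(11,12)] points])
qed

lemma has_ONan_U_theta: "has_ONan f q (U_theta q \<theta>)"
  using exists_scaling has_ONan_if_scaling by blast

end

lemma notin_subfield_q_if_norm_nonsquare:
  assumes "\<not> (\<exists>y \<in> subfield_q q. y ^ 2 = \<theta> ^ (q + 1))"
  shows "(\<theta>::'a::field) \<notin> subfield_q q"
proof
  assume "\<theta> \<in> subfield_q q"
  then have "\<theta> ^ 2 = \<theta> ^ (q + 1)"
    by (simp add: subfield_q_def power2_eq_square)
  then show False
    using assms \<open>\<theta> \<in> subfield_q q\<close> by blast
qed

lemma exists_planar_monomial:
  fixes f :: "'a::{field,finite} \<Rightarrow> 'a"
  assumes "prime p" and "odd p" and "card (UNIV :: 'a set) = p ^ (2 * n)"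
    and "odd ((2 * n) div gcd (2 * n) k)" and "f = (\<lambda>x. x ^ 2) \<or> f = (\<lambda>x. x ^ (p ^ k + 1))"
  shows "\<exists>s M. planar_monomial f s M"
proof -
  have char: "CHAR('a) = p"
    using assms(1,3) by (rule CHAR_eq_if_card_prime_power)
  show ?thesis
  proof (cases "f = (\<lambda>x. x ^ 2)")
    case True
    then have "planar_monomial f 1 1"
      using assms(2) char by unfold_locales (auto simp: fun_eq_iff power2_eq_square intro: exI[of _ 0])
    then show ?thesis
      by blast
  next
    case False
    then have "planar_monomial f (p ^ k) ((2 * n) div gcd (2 * n) k)"
      using assms char power_power_div_gcd_eq_self[OF assms(3)] by unfold_locales auto
    then show ?thesis
      by blast
  qed
qed

theorem theorem3p14:
  fixes p n k :: nat and f :: "'a::{field,finite} \<Rightarrow> 'a" and \<theta> :: 'a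
  assumes "prime p" and "odd p" and "n \<ge> 1"
    and "card (UNIV :: 'a set) = p ^ (2 * n)"
    and "1 \<le> k" and "k \<le> n" and "odd ((2 * n) div gcd (2 * n) k)"
    and "f = (\<lambda>x. x ^ 2) \<or> f = (\<lambda>x. x ^ (p ^ k + 1))"
    and "\<theta> \<noteq> 0"
    and "\<not> (\<exists>y \<in> subfield_q (p ^ n). y ^ 2 = \<theta> ^ (p ^ n + 1))"
  shows "has_ONan f (p ^ n) (U_theta (p ^ n) \<theta>)"
proof -
  \<comment> \<open>\<open>n \<ge> 1\<close> and \<open>\<theta> \<noteq> 0\<close> follow from the other hypotheses.\<close>
  have "CHAR('a) = p"
    using assms(1,4) by (rule CHAR_eq_if_card_prime_power)
  then have "quadratic_extension (p ^ n) \<theta>"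
    using assms(4) notin_subfield_q_if_norm_nonsquare[OF assms(10)]
    by unfold_locales (auto simp: mult_2 power_add)
  moreover obtain s M where "planar_monomial f s M"
    using exists_planar_monomial[OF assms(1,2,4,7,8)] by blast
  ultimately interpret monomial_unital "p ^ n" \<theta> f s M
    using assms(10) by (simp add: monomial_unital_def monomial_unital_axioms_def)
  show ?thesis
    by (rule has_ONan_U_theta)
qed

end
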